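(* Let $(\mathcal D,h^\star)$ be an active search instance with $h^\star$ non-decreasing, and run the policy $\mathcal A_{\mathrm{ADAP}}$ described in the context. Fix a threshold $t$ with $q_t>0$ and $s_t>0$, let $(a,b)$ be its dyadic pair, and let $s_\star$ be the shell with $(a,b)\in S_{s_\star}$. For every integer $u\ge0$, conditional on the algorithm reaching shell $s_\star+u$, the probability that shell $s_\star+u$ fails to output a verified positive is at most \[ \rho_u=e^{-2^{u+1}}+e^{-2^u}. \]
   Context: An active search instance $(\mathcal D,h^\star)$: $\mathcal D$ a distribution on $\mathbb R$, $h^\star:\mathbb R\to[0,1]$ measurable; each generated candidate has score $R\sim\mathcal D$ and hidden label $V$ with $\Pr(V=1\mid R=r)=h^\star(r)$, candidates i.i.d.; verifying a candidate reveals its label. $q_t=\Pr(R\ge t)$, $s_t=\Pr(R\ge t,V=1)$. The dyadic pair of $t$ is the pair of integers $a,b\ge0$ with $2^{-a-1}<q_t\le2^{-a}$ and $2^{-b}\le s_t<2^{-b+1}$. Costs $c_{\mathrm{rew}},c_{\mathrm{ver}}>0$, $c_{\min}=\min\{c_{\mathrm{rew}},c_{\mathrm{ver}}\}$; shells $S_s=\{(a,b)\in\mathbb Z_{\ge0}^2:a\le b,\ 2^sc_{\min}\le c_{\mathrm{rew}}2^b+c_{\mathrm{ver}}2^{b-a}<2^{s+1}c_{\min}\}$. Policy $\mathcal A_{\mathrm{ADAP}}$: start with empty pool $P$. For $s=0,1,2,\dots$: if $S_s=\emptyset$ skip; otherwise let $b_s^\star=\max\{b:(a,b)\in S_s\}$,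 $j_s^\star=\max\{b-a:(a,b)\in S_s\}$, $m_s=\lceil2^{b_s^\star+1}\rceil$, $k_s=\lceil6\cdot2^{j_s^\star}\rceil$; generate $m_s$ fresh candidates and add them to $P$; order $P$ by non-increasing score, and for $j=1,\dots,\min\{k_s,|P|\}$ verify the $j$-th candidate, remove it from $P$, and return it if its label is $1$. Shell $s$ fails if none of its verifications returns label $1$. *)

theory Defs
  imports "HOL-Probability.Probability"
begin

definition shell :: "real \<Rightarrow> real \<Rightarrow> nat \<Rightarrow> (nat \<times> nat) set" where
  "shell crew cver s = {(a, b). a \<le> b \<and>
     2 ^ s * min crew cver \<le> crew * 2 ^ b + cver * 2 ^ (b - a) \<and>
     crew * 2 ^ b + cver * 2 ^ (b - a) < 2 ^ (s + 1) * min crew cver}"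

definition bstar :: "real \<Rightarrow> real \<Rightarrow> nat \<Rightarrow> nat" where
  "bstar crew cver s = Max (snd ` shell crew cver s)"

definition jstar :: "real \<Rightarrow> real \<Rightarrow> nat \<Rightarrow> nat" where
  "jstar crew cver s = Max ((\<lambda>(a, b). b - a) ` shell crew cver s)"

definition m_gen :: "real \<Rightarrow> real \<Rightarrow> nat \<Rightarrow> nat" where
  "m_gen crew cver s = nat \<lceil>(2::real) ^ (bstar crew cver s + 1)\<rceil>"

definition k_ver :: "real \<Rightarrow> real \<Rightarrow> nat \<Rightarrow> nat" where
  "k_ver crew cver s = nat \<lceil>6 * (2::real) ^ jstar crew cver s\<rceil>"

definition gen_before :: "real \<Rightarrow> real \<Rightarrow> nat \<Rightarrow> nat" where
  "gen_before crew cver s =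
     (\<Sum>s'<s. if shell crew cver s' = {} then 0 else m_gen crew cver s')"

(* Candidates are identified by their generation index i; candidate i has score Rs i.
   Pool before shell s, as a list of candidate indices (only meaningful if all earlier
   shells failed). *)
fun pool_before :: "real \<Rightarrow> real \<Rightarrow> (nat \<Rightarrow> real) \<Rightarrow> nat \<Rightarrow> nat list"
and ordered_pool :: "real \<Rightarrow> real \<Rightarrow> (nat \<Rightarrow> real) \<Rightarrow> nat \<Rightarrow> nat list" where
  "pool_before crew cver Rs 0 = []"
| "pool_before crew cver Rs (Suc s) =
     (if shell crew cver s = {} then pool_before crew cver Rs s
      else drop (k_ver crew cver s) (ordered_pool crew cver Rs s))"
| "ordered_pool crew cver Rs s =
     sort_key (\<lambda>i. - Rs i)
       (pool_before crew cver Rs s @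
        [gen_before crew cver s ..< gen_before crew cver s + m_gen crew cver s])"

definition verified :: "real \<Rightarrow> real \<Rightarrow> (nat \<Rightarrow> real) \<Rightarrow> nat \<Rightarrow> nat list" where
  "verified crew cver Rs s =
     (if shell crew cver s = {} then [] else take (k_ver crew cver s) (ordered_pool crew cver Rs s))"

(* shell s fails: none of its verifications returns label 1 (a skipped shell trivially fails) *)
definition shell_fails :: "real \<Rightarrow> real \<Rightarrow> (nat \<Rightarrow> real) \<Rightarrow> (nat \<Rightarrow> bool) \<Rightarrow> nat \<Rightarrow> bool" where
  "shell_fails crew cver Rs Vs s = (\<forall>i \<in> set (verified crew cver Rs s). \<not> Vs i)"

definition reaches :: "real \<Rightarrow> real \<Rightarrow> (nat \<Rightarrow> real) \<Rightarrow> (nat \<Rightarrow> bool) \<Rightarrow> nat \<Rightarrow> bool" where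
  "reaches crew cver Rs Vs s = (\<forall>s' < s. shell_fails crew cver Rs Vs s')"

end

theory Submission
  imports Defs
begin

text \<open>
  Given the scores, the labels are independent and a candidate of score r is positive with
  probability h r. Hence the probability of reaching shell s + 1 is the expected product of
  1 - h over the candidates verified so far, which splits into the candidates verified before
  shell s and those verified in shell s. The latter are the k_s best candidates of the pool; as
  h is monotone, their factor is at most that of the first k_s fresh candidates of shell s with
  score at least t. This factor depends only on the m_s fresh candidates, which are independent
  of the past, and its expectation is at most (1 - s_t)^m_s + (1 - s_t / q_t)^k_s. In shell
  s_* + u the choice of m_s and k_s makes the two terms at most exp (-2^(u+1)) and exp (-2^u).
\<close>

lemma insort_key_cong_order:
  assumes "\<forall>a\<in>insert x (set ys). \<forall>b\<in>insert x (set ys). f a \<le> f b \<longleftrightarrow> g a \<le> g b"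
  shows "insort_key f x ys = insort_key g x ys"
  using assms by (induction ys) auto

lemma sort_key_cong_order:
  fixes f g :: "'a \<Rightarrow> 'b::linorder"
  assumes "\<forall>a\<in>set xs. \<forall>b\<in>set xs. f a \<le> f b \<longleftrightarrow> g a \<le> g b"
  shows "sort_key f xs = sort_key g xs"
  using assms
proof (induction xs)
  case (Cons x xs)
  then have "sort_key f xs = sort_key g xs" by simp
  moreover have "insort_key f x (sort_key g xs) = insort_key g x (sort_key g xs)"
    by (rule insort_key_cong_order) (use Cons.prems in auto)
  ultimately show ?case by simp
qed simp

lemma sort_key_take_ge_drop:
  assumes "x \<in> set (drop k (sort_key (\<lambda>i. - r i) xs))" "y \<in> set (take k (sort_key (\<lambda>i. - r i) xs))"
  shows "(r x :: real) \<le> r y"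
proof -
  let ?L = "sort_key (\<lambda>i. - r i) xs"
  have "sorted (map (\<lambda>i. - r i) (take k ?L) @ map (\<lambda>i. - r i) (drop k ?L))"
    by (metis append_take_drop_id map_append sorted_sort_key)
  then show ?thesis using assms unfolding sorted_append by auto
qed

lemma prod_le_prod_if_dominated:
  fixes G :: "'a \<Rightarrow> real"
  assumes "finite T" "finite H" and G01: "\<And>i. 0 \<le> G i \<and> G i \<le> 1"
    and card: "card (H - T) \<le> card (T - H)"
    and dominated: "\<And>x y. x \<in> H - T \<Longrightarrow> y \<in> T - H \<Longrightarrow> G y \<le> G x"
  shows "prod G T \<le> prod G H"
proof -
  have key: "prod G (T - H) \<le> prod G (H - T)"
  proof (cases "H - T = {}")
    case True
    have "prod G (T - H) \<le> 1"
      using G01 by (intro prod_le_1) auto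
    then show ?thesis by (simp only: True prod.empty)
  next
    case False
    define c where "c = Min (G ` (H - T))"
    have "c \<in> G ` (H - T)"
      unfolding c_def using False \<open>finite H\<close> by (intro Min_in) auto
    then have c01: "0 \<le> c \<and> c \<le> 1" and c_ge: "\<And>y. y \<in> T - H \<Longrightarrow> G y \<le> c"
      using G01 dominated by auto
    have "prod G (T - H) \<le> c ^ card (T - H)"
      using G01 c_ge prod_mono[of "T - H" G "\<lambda>_. c"] by simp
    also have "\<dots> \<le> c ^ card (H - T)"
      using c01 card by (intro power_decreasing) auto
    also have "\<dots> \<le> prod G (H - T)"
      using c01 \<open>finite H\<close> prod_mono[of "H - T" "\<lambda>_. c" G] by (simp add: c_def)
    finally show ?thesis .
  qed
  have "prod G T = prod G (T \<inter> H) * prod G (T - H)"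
    using \<open>finite T\<close> by (rule prod.Int_Diff)
  also have "\<dots> \<le> prod G (T \<inter> H) * prod G (H - T)"
    using key G01 by (intro mult_left_mono prod_nonneg) auto
  also have "\<dots> = prod G H"
    using prod.Int_Diff[OF \<open>finite H\<close>, of G T] by (simp add: Int_commute)
  finally show ?thesis .
qed

lemma sum_Pow_select:
  fixes w :: "'a set \<Rightarrow> 'b::comm_semiring_1"
  assumes "finite A" "S \<subseteq> A"
  shows "(\<Sum>T\<in>Pow A. (if S = T then 1 else 0) * w T) = w S"
proof -
  have "(\<Sum>T\<in>Pow A. (if S = T then 1 else 0) * w T) = (\<Sum>T\<in>Pow A. if S = T then w T else 0)"
    by (intro sum.cong) auto
  then show ?thesis using assms by simp
qed

lemma power_one_minus_le_exp:
  fixes x :: real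
  assumes "0 \<le> x" "x \<le> 1"
  shows "(1 - x) ^ n \<le> exp (- (x * n))"
proof -
  have "(1 - x) ^ n \<le> exp (- x) ^ n"
    using assms exp_ge_add_one_self[of "- x"] by (intro power_mono) auto
  then show ?thesis by (simp add: exp_of_nat_mult[symmetric] mult.commute)
qed

lemma power_one_minus_le_exp_two_pow:
  fixes s :: real
  assumes "1 / 2 ^ b \<le> s" "s \<le> 1" "2 ^ (b + u + 1) \<le> real m"
  shows "(1 - s) ^ m \<le> exp (- (2 ^ (u + 1)))"
proof -
  have s0: "0 \<le> s"
    by (rule order_trans[OF _ assms(1)]) simp
  have "(2::real) ^ (u + 1) = 1 / 2 ^ b * 2 ^ (b + u + 1)"
    by (simp add: power_add)
  also have "\<dots> \<le> s * m"
    using assms s0 by (intro mult_mono) auto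
  finally have "exp (- (s * m)) \<le> exp (- (2 ^ (u + 1)))"
    by simp
  with power_one_minus_le_exp[of s m] assms(2) s0 show ?thesis
    by linarith
qed

lemma power_one_minus_div_le_exp_two_pow:
  fixes s q :: real
  assumes "1 / 2 ^ b \<le> s" "s \<le> q" "0 < q" "q \<le> 1 / 2 ^ a" "a \<le> b"
    and "6 * 2 ^ (b + u - a) \<le> real k"
  shows "(1 - s / q) ^ k \<le> exp (- (2 ^ u))"
proof -
  have s0: "0 \<le> s"
    by (rule order_trans[OF _ assms(1)]) simp
  have "(2::real) ^ u = 2 ^ a / 2 ^ b * 2 ^ (b + u - a)"
    using assms(5) by (simp add: field_simps flip: power_add)
  also have "\<dots> \<le> s / q * 2 ^ (b + u - a)"
    using assms s0 by (intro mult_right_mono) (simp_all add: field_simps)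
  also have "\<dots> \<le> s / q * k"
  proof (rule mult_left_mono)
    have "0 \<le> (2::real) ^ (b + u - a)"
      by simp
    with assms(6) show "2 ^ (b + u - a) \<le> real k"
      by linarith
  qed (use assms(3) s0 in simp)
  finally have "exp (- (s / q * k)) \<le> exp (- (2 ^ u))"
    by simp
  moreover have "0 \<le> s / q" "s / q \<le> 1"
    using s0 assms(2,3) by auto
  ultimately show ?thesis
    using power_one_minus_le_exp[of "s / q" k] by linarith
qed

lemma (in product_sigma_finite) nn_integral_PiM_mult_split:
  assumes IJ: "I \<inter> J = {}" "finite I" "finite J"
    and f: "f \<in> borel_measurable (Pi\<^sub>M I M)" "\<And>x y. \<forall>i\<in>I. x i = y i \<Longrightarrow> f x = f y"
    and g: "g \<in> borel_measurable (Pi\<^sub>M J M)" "\<And>x y. \<forall>i\<in>J. x i = y i \<Longrightarrow> g x = g y"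
  shows "(\<integral>\<^sup>+x. f x * g x \<partial>Pi\<^sub>M (I \<union> J) M) = (\<integral>\<^sup>+x. f x \<partial>Pi\<^sub>M I M) * (\<integral>\<^sup>+y. g y \<partial>Pi\<^sub>M J M)"
proof -
  have "f = (\<lambda>x. f (restrict x I))" "g = (\<lambda>x. g (restrict x J))"
    using f(2) g(2) by auto
  then have "f \<in> borel_measurable (Pi\<^sub>M (I \<union> J) M)" "g \<in> borel_measurable (Pi\<^sub>M (I \<union> J) M)"
    using measurable_compose[OF measurable_restrict_subset f(1), of "I \<union> J"]
      measurable_compose[OF measurable_restrict_subset g(1), of "I \<union> J"] by auto
  then have "(\<integral>\<^sup>+x. f x * g x \<partial>Pi\<^sub>M (I \<union> J) M)
      = (\<integral>\<^sup>+x. \<integral>\<^sup>+y. f (merge I J (x, y)) * g (merge I J (x, y)) \<partial>Pi\<^sub>M J M \<partial>Pi\<^sub>M I M)"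
    using IJ by (intro product_nn_integral_fold) auto
  also have "\<dots> = (\<integral>\<^sup>+x. f x * (\<integral>\<^sup>+y. g y \<partial>Pi\<^sub>M J M) \<partial>Pi\<^sub>M I M)"
  proof -
    have "f (merge I J (x, y)) = f x" "g (merge I J (x, y)) = g y" for x y
      using IJ(1) by (auto intro!: f(2) g(2))
    then show ?thesis using g(1) by (simp add: nn_integral_cmult)
  qed
  also have "\<dots> = (\<integral>\<^sup>+x. f x \<partial>Pi\<^sub>M I M) * (\<integral>\<^sup>+y. g y \<partial>Pi\<^sub>M J M)"
    using f(1) by (rule nn_integral_multc)
  finally show ?thesis .
qed

lemma (in prob_space) cond_prob_le:
  assumes "prob {\<omega> \<in> space M. P \<omega> \<and> Q \<omega>} \<le> c * prob {\<omega> \<in> space M. Q \<omega>}" "0 \<le> c"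
  shows "cond_prob M P Q \<le> c"
  using assms by (cases "prob {\<omega> \<in> space M. Q \<omega>} = 0") (auto simp: cond_prob_def divide_le_eq)

section \<open>The pool of candidates\<close>

lemma gen_before_Suc:
  "gen_before crew cver (Suc s) =
     gen_before crew cver s + (if shell crew cver s = {} then 0 else m_gen crew cver s)"
  by (simp add: gen_before_def)

lemma gen_before_mono: "s \<le> s' \<Longrightarrow> gen_before crew cver s \<le> gen_before crew cver s'"
  by (induction s' rule: dec_induct) (auto simp: gen_before_Suc)

declare ordered_pool.simps [simp del]

lemma set_ordered_pool:
  "set (ordered_pool crew cver r s) =
     set (pool_before crew cver r s)
       \<union> {gen_before crew cver s..<gen_before crew cver s + m_gen crew cver s}"
  by (simp add: ordered_pool.simps)

lemma pool_before_subset: "set (pool_before crew cver r s) \<subseteq> {..<gen_before crew cver s}"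
proof (induction s)
  case (Suc s)
  show ?case
  proof (cases "shell crew cver s = {}")
    case True
    then show ?thesis using Suc.IH by (simp add: gen_before_Suc)
  next
    case False
    then have "set (pool_before crew cver r (Suc s)) \<subseteq> set (ordered_pool crew cver r s)"
      by (simp add: set_drop_subset)
    also have "\<dots> \<subseteq> {..<gen_before crew cver (Suc s)}"
      using Suc.IH False by (auto simp: set_ordered_pool gen_before_Suc)
    finally show ?thesis .
  qed
qed simp

lemma distinct_pool_before: "distinct (pool_before crew cver r s)"
proof (induction s)
  case (Suc s)
  then have "distinct (ordered_pool crew cver r s)"
    using pool_before_subset[of crew cver r s] by (fastforce simp: ordered_pool.simps)
  then show ?case using Suc.IH by simp
qed simp

lemma distinct_ordered_pool: "distinct (ordered_pool crew cver r s)"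
  using distinct_pool_before[of crew cver r s] pool_before_subset[of crew cver r s]
  by (fastforce simp: ordered_pool.simps)

lemma set_verified_subset:
  "set (verified crew cver r s) \<subseteq>
     set (pool_before crew cver r s) \<union> {gen_before crew cver s..<gen_before crew cver (Suc s)}"
  using set_take_subset[of "k_ver crew cver s" "ordered_pool crew cver r s"]
  by (auto simp: verified_def gen_before_Suc set_ordered_pool)

lemma set_verified_subset_gen_before:
  "set (verified crew cver r s) \<subseteq> {..<gen_before crew cver (Suc s)}"
  using set_verified_subset[of crew cver r s] pool_before_subset[of crew cver r s]
    gen_before_mono[of s "Suc s" crew cver] by fastforce

definition verified_before :: "real \<Rightarrow> real \<Rightarrow> (nat \<Rightarrow> real) \<Rightarrow> nat \<Rightarrow> nat set" where
  "verified_before crew cver r s = (\<Union>s'<s. set (verified crew cver r s'))"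

lemma reaches_iff_verified_before:
  "reaches crew cver r v s \<longleftrightarrow> (\<forall>i\<in>verified_before crew cver r s. \<not> v i)"
  by (auto simp: reaches_def verified_before_def shell_fails_def)

lemma reaches_Suc:
  "reaches crew cver r v (Suc s) \<longleftrightarrow> shell_fails crew cver r v s \<and> reaches crew cver r v s"
  by (auto simp: reaches_def less_Suc_eq)

lemma verified_before_Suc:
  "verified_before crew cver r (Suc s) = verified_before crew cver r s \<union> set (verified crew cver r s)"
  by (auto simp: verified_before_def less_Suc_eq)

lemma verified_before_subset: "verified_before crew cver r s \<subseteq> {..<gen_before crew cver s}"
  unfolding verified_before_def
proof (intro UN_least)
  fix s' assume "s' \<in> {..<s}"
  then have "gen_before crew cver (Suc s') \<le> gen_before crew cver s"
    by (intro gen_before_mono) simp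
  then show "set (verified crew cver r s') \<subseteq> {..<gen_before crew cver s}"
    using set_verified_subset_gen_before[of crew cver r s'] by auto
qed

lemma verified_before_disjoint_pool:
  "verified_before crew cver r s \<inter> set (pool_before crew cver r s) = {}"
proof (induction s)
  case 0
  then show ?case by (simp add: verified_before_def)
next
  case (Suc s)
  show ?case
  proof (cases "shell crew cver s = {}")
    case True
    then show ?thesis using Suc.IH by (simp add: verified_before_Suc verified_def)
  next
    case False
    let ?O = "ordered_pool crew cver r s" and ?k = "k_ver crew cver s"
    have "set (take ?k ?O) \<inter> set (drop ?k ?O) = {}"
      using set_take_disj_set_drop_if_distinct[OF distinct_ordered_pool] by simp
    moreover have "verified_before crew cver r s \<inter> set ?O = {}"
      using Suc.IH verified_before_subset[of crew cver r s] by (auto simp: set_ordered_pool)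
    ultimately show ?thesis
      using False set_drop_subset[of ?k ?O] by (auto simp: verified_before_Suc verified_def)
  qed
qed

lemma verified_disjoint_verified_before:
  "set (verified crew cver r s) \<inter> verified_before crew cver r s = {}"
proof -
  have "{gen_before crew cver s..<gen_before crew cver (Suc s)} \<inter> {..<gen_before crew cver s} = {}"
    by auto
  then show ?thesis
    using set_verified_subset[of crew cver r s] verified_before_disjoint_pool[of crew cver r s]
      verified_before_subset[of crew cver r s] by blast
qed

section \<open>Dependence on the order of the scores only\<close>

definition same_order :: "nat \<Rightarrow> (nat \<Rightarrow> real) \<Rightarrow> (nat \<Rightarrow> real) \<Rightarrow> bool" where
  "same_order N r r' \<longleftrightarrow> (\<forall>i<N. \<forall>j<N. r i \<le> r j \<longleftrightarrow> r' i \<le> r' j)"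

definition order_pattern :: "nat \<Rightarrow> (nat \<Rightarrow> real) \<Rightarrow> (nat \<times> nat) set" where
  "order_pattern N r = {(i, j). i < N \<and> j < N \<and> r i \<le> r j}"

lemma same_order_iff_order_pattern:
  "same_order N r r' \<longleftrightarrow> order_pattern N r = order_pattern N r'"
proof
  assume "same_order N r r'"
  then show "order_pattern N r = order_pattern N r'"
    by (auto simp: same_order_def order_pattern_def)
next
  assume patterns: "order_pattern N r = order_pattern N r'"
  show "same_order N r r'"
    unfolding same_order_def
  proof (intro allI impI)
    fix i j assume "i < N" "j < N"
    then show "r i \<le> r j \<longleftrightarrow> r' i \<le> r' j"
      using patterns unfolding order_pattern_def set_eq_iff by blast
  qed
qed

lemma order_pattern_eq_iff:
  assumes "A \<subseteq> {..<N} \<times> {..<N}"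
  shows "order_pattern N r = A \<longleftrightarrow> (\<forall>i\<in>{..<N}. \<forall>j\<in>{..<N}. (r i \<le> r j) = ((i, j) \<in> A))"
proof
  assume "order_pattern N r = A"
  then show "\<forall>i\<in>{..<N}. \<forall>j\<in>{..<N}. (r i \<le> r j) = ((i, j) \<in> A)"
    unfolding \<open>order_pattern N r = A\<close>[symmetric] order_pattern_def by simp
next
  assume pairs: "\<forall>i\<in>{..<N}. \<forall>j\<in>{..<N}. (r i \<le> r j) = ((i, j) \<in> A)"
  show "order_pattern N r = A"
  proof (rule set_eqI)
    fix p
    show "p \<in> order_pattern N r \<longleftrightarrow> p \<in> A"
      using pairs assms by (cases p) (auto simp: order_pattern_def)
  qed
qed

lemma ordered_pool_same_order:
  assumes "same_order N r r'" "gen_before crew cver s + m_gen crew cver s \<le> N"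
    and "pool_before crew cver r s = pool_before crew cver r' s"
  shows "ordered_pool crew cver r s = ordered_pool crew cver r' s"
proof -
  let ?L = "pool_before crew cver r' s
      @ [gen_before crew cver s..<gen_before crew cver s + m_gen crew cver s]"
  have L: "set ?L \<subseteq> {..<N}"
    using pool_before_subset[of crew cver r' s] assms(2) by fastforce
  have "ordered_pool crew cver r s = sort_key (\<lambda>i. - r i) ?L"
    using assms(3) by (simp add: ordered_pool.simps)
  also have "\<dots> = sort_key (\<lambda>i. - r' i) ?L"
    using L assms(1) unfolding same_order_def by (intro sort_key_cong_order) (auto simp del: set_append)
  also have "\<dots> = ordered_pool crew cver r' s"
    by (simp add: ordered_pool.simps)
  finally show ?thesis .
qed

lemma pool_before_same_order:
  assumes "same_order N r r'" "gen_before crew cver s \<le> N"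
  shows "pool_before crew cver r s = pool_before crew cver r' s"
  using assms(2)
proof (induction s)
  case (Suc s)
  show ?case
  proof (cases "shell crew cver s = {}")
    case True
    then show ?thesis using Suc by (simp add: gen_before_Suc)
  next
    case False
    then have "gen_before crew cver s + m_gen crew cver s \<le> N"
      using Suc.prems by (simp add: gen_before_Suc)
    then show ?thesis
      using Suc False ordered_pool_same_order[OF assms(1)] by simp
  qed
qed simp

lemma verified_same_order:
  assumes "same_order N r r'" "gen_before crew cver (Suc s) \<le> N"
  shows "verified crew cver r s = verified crew cver r' s"
proof (cases "shell crew cver s = {}")
  case True
  then show ?thesis by (simp add: verified_def)
next
  case False
  then have "gen_before crew cver s + m_gen crew cver s \<le> N"
    using assms(2) by (simp add: gen_before_Suc)
  then show ?thesis
    using assms pool_before_same_order[OF assms(1)] ordered_pool_same_order[OF assms(1)]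
    by (simp add: verified_def)
qed

lemma verified_before_same_order:
  assumes "same_order N r r'" "gen_before crew cver s \<le> N"
  shows "verified_before crew cver r s = verified_before crew cver r' s"
proof -
  have "verified crew cver r s' = verified crew cver r' s'" if "s' < s" for s'
    using verified_same_order[OF assms(1)] gen_before_mono[of "Suc s'" s crew cver] that assms(2)
    by simp
  then show ?thesis by (auto simp: verified_before_def)
qed

section \<open>Comparison with the fresh candidates\<close>

(* Given the scores r, the probability that the first k candidates of js with score at least t
   are all negative. *)
definition miss_above :: "real \<Rightarrow> (real \<Rightarrow> real) \<Rightarrow> nat list \<Rightarrow> nat \<Rightarrow> (nat \<Rightarrow> real) \<Rightarrow> real" where
  "miss_above t h js k r = (\<Prod>i\<leftarrow>take k (filter (\<lambda>i. t \<le> r i) js). 1 - h (r i))"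

lemma miss_above_Nil [simp]: "miss_above t h [] k r = 1"
  by (simp add: miss_above_def)

lemma miss_above_Cons:
  "miss_above t h (i # js) k r =
     (if k = 0 then 1 else if t \<le> r i then (1 - h (r i)) * miss_above t h js (k - 1) r
      else miss_above t h js k r)"
  by (cases k) (auto simp: miss_above_def)

lemma miss_above_cong: "\<forall>i\<in>set js. r i = r' i \<Longrightarrow> miss_above t h js k r = miss_above t h js k r'"
  by (induction js arbitrary: k) (auto simp: miss_above_Cons)

lemma miss_above_bounds:
  assumes "\<And>x. 0 \<le> h x \<and> h x \<le> 1"
  shows "0 \<le> miss_above t h js k r \<and> miss_above t h js k r \<le> 1"
  using assms by (induction js arbitrary: k) (auto simp: miss_above_Cons intro: mult_le_one)

(* Every candidate among the k best of xs but not among the first k of ys above t scores at least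
   as high as every candidate of the converse difference, which is not larger. *)
lemma prod_top_scores_le_miss_above:
  fixes h :: "real \<Rightarrow> real"
  assumes "mono h" and h01: "\<And>x. 0 \<le> h x \<and> h x \<le> 1"
    and "distinct xs" "distinct ys" "set ys \<subseteq> set xs"
  shows "(\<Prod>i\<in>set (take k (sort_key (\<lambda>i. - r i) xs)). 1 - h (r i)) \<le> miss_above t h ys k r"
proof -
  define L where "L = sort_key (\<lambda>i. - r i) xs"
  define T where "T = set (take k L)"
  define H where "H = set (take k (filter (\<lambda>i. t \<le> r i) ys))"
  have miss: "miss_above t h ys k r = (\<Prod>i\<in>H. 1 - h (r i))"
    using \<open>distinct ys\<close> by (simp add: miss_above_def H_def prod.distinct_set_conv_list)
  have "card (H - T) \<le> card (T - H)"
  proof (cases "H \<subseteq> T")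
    case False
    then obtain x where "x \<in> H" "x \<notin> T" by blast
    moreover have "x \<in> set L"
      using \<open>x \<in> H\<close> \<open>set ys \<subseteq> set xs\<close> set_take_subset by (fastforce simp: H_def L_def)
    ultimately have "k < length L"
      by (cases "k < length L") (auto simp: T_def)
    then have "card T = k"
      using distinct_card[of "take k L"] \<open>distinct xs\<close> by (simp add: T_def L_def)
    moreover have "card H \<le> k"
      using card_length[of "take k (filter (\<lambda>i. t \<le> r i) ys)"] by (simp add: H_def)
    ultimately show ?thesis
      by (simp add: card_Diff_subset_Int T_def H_def Int_commute)
  next
    case True
    then have "H - T = {}" by blast
    then show ?thesis by (metis card.empty le0)
  qed
  moreover have "1 - h (r y) \<le> 1 - h (r x)" if "x \<in> H - T" "y \<in> T - H" for x y
  proof -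
    have "x \<in> set L"
      using that \<open>set ys \<subseteq> set xs\<close> set_take_subset by (fastforce simp: H_def L_def)
    then have "x \<in> set (drop k L)"
      using that by (metis DiffE T_def Un_iff append_take_drop_id set_append)
    then have "r x \<le> r y"
      using that sort_key_take_ge_drop by (auto simp: L_def T_def)
    then show ?thesis using \<open>mono h\<close> by (simp add: monoD)
  qed
  ultimately have "(\<Prod>i\<in>T. 1 - h (r i)) \<le> (\<Prod>i\<in>H. 1 - h (r i))"
    using h01 by (intro prod_le_prod_if_dominated) (auto simp: T_def H_def)
  then show ?thesis by (simp add: miss T_def L_def)
qed

lemma prod_verified_le_miss_above:
  fixes h :: "real \<Rightarrow> real"
  assumes "mono h" "\<And>x. 0 \<le> h x \<and> h x \<le> 1" "shell crew cver s \<noteq> {}"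
  shows "(\<Prod>i\<in>set (verified crew cver r s). 1 - h (r i))
    \<le> miss_above t h [gen_before crew cver s..<gen_before crew cver (Suc s)] (k_ver crew cver s) r"
proof -
  let ?fresh = "[gen_before crew cver s..<gen_before crew cver s + m_gen crew cver s]"
  have "distinct (pool_before crew cver r s @ ?fresh)"
    using distinct_pool_before[of crew cver r s] pool_before_subset[of crew cver r s] by fastforce
  from prod_top_scores_le_miss_above[OF assms(1,2) this, of ?fresh]
  show ?thesis using assms(3) by (simp add: verified_def ordered_pool.simps gen_before_Suc)
qed

lemma prod_verified_before_Suc_le:
  fixes h :: "real \<Rightarrow> real"
  assumes "mono h" and h01: "\<And>x. 0 \<le> h x \<and> h x \<le> 1" and "shell crew cver s \<noteq> {}"
  shows "(\<Prod>i\<in>verified_before crew cver r (Suc s). 1 - h (r i))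
    \<le> (\<Prod>i\<in>verified_before crew cver r s. 1 - h (r i))
      * miss_above t h [gen_before crew cver s..<gen_before crew cver (Suc s)] (k_ver crew cver s) r"
proof -
  let ?G = "\<lambda>i. 1 - h (r i)"
  have "finite (verified_before crew cver r s)"
    using finite_subset[OF verified_before_subset finite_lessThan] .
  then have "prod ?G (verified_before crew cver r (Suc s))
      = prod ?G (verified_before crew cver r s) * prod ?G (set (verified crew cver r s))"
    using prod.union_disjoint[of "verified_before crew cver r s" "set (verified crew cver r s)" ?G]
      verified_disjoint_verified_before[of crew cver r s]
    by (simp add: verified_before_Suc Int_commute)
  also have "\<dots> \<le> prod ?G (verified_before crew cver r s)
      * miss_above t h [gen_before crew cver s..<gen_before crew cver (Suc s)] (k_ver crew cver s) r"
  proof (rule mult_left_mono)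
    show "0 \<le> prod ?G (verified_before crew cver r s)"
      using h01 by (intro prod_nonneg) (simp add: algebra_simps)
  qed (rule prod_verified_le_miss_above[OF assms])
  finally show ?thesis .
qed

lemma m_gen_pos: "0 < m_gen crew cver s"
proof -
  have "(0::real) < 2 ^ (bstar crew cver s + 1)" by simp
  then show ?thesis unfolding m_gen_def by linarith
qed

lemma shell_subset_atMost:
  assumes "crew > 0" "cver > 0"
  shows "shell crew cver s \<subseteq> {..s} \<times> {..s}"
proof safe
  fix a b assume ab: "(a, b) \<in> shell crew cver s"
  have "crew * 2 ^ b < 2 ^ (s + 1) * crew"
  proof -
    have "crew * 2 ^ b \<le> crew * 2 ^ b + cver * 2 ^ (b - a)" using assms by simp
    also have "\<dots> < 2 ^ (s + 1) * min crew cver" using ab by (simp add: shell_def)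
    also have "\<dots> \<le> 2 ^ (s + 1) * crew" by (intro mult_left_mono) auto
    finally show ?thesis .
  qed
  then have "(2::real) ^ b < 2 ^ (s + 1)" using assms by (simp add: mult.commute)
  then have "b \<le> s" using power_less_imp_less_exp[of "2::real" b "s + 1"] by simp
  moreover have "a \<le> b" using ab by (simp add: shell_def)
  ultimately show "a \<le> s" "b \<le> s" by simp_all
qed

lemma finite_shell: "crew > 0 \<Longrightarrow> cver > 0 \<Longrightarrow> finite (shell crew cver s)"
  using shell_subset_atMost by (metis finite_SigmaI finite_atMost finite_subset)

lemma shell_shift:
  assumes "(a, b) \<in> shell crew cver s"
  shows "(a, b + u) \<in> shell crew cver (s + u)"
proof -
  have "a \<le> b" using assms by (simp add: shell_def)
  then have "b + u - a = (b - a) + u" by simp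
  then have "crew * 2 ^ (b + u) + cver * 2 ^ (b + u - a) = 2 ^ u * (crew * 2 ^ b + cver * 2 ^ (b - a))"
    by (simp add: power_add algebra_simps)
  moreover have "(2::real) ^ (s + u) = 2 ^ u * 2 ^ s" "(2::real) ^ (s + u + 1) = 2 ^ u * 2 ^ (s + 1)"
    by (simp_all add: power_add)
  ultimately show ?thesis
    using assms \<open>a \<le> b\<close> by (simp add: shell_def mult.assoc)
qed

lemma m_gen_ge:
  assumes "(a, b) \<in> shell crew cver s" "finite (shell crew cver s)"
  shows "2 ^ (b + 1) \<le> real (m_gen crew cver s)"
proof -
  have "b \<le> bstar crew cver s"
    unfolding bstar_def using assms by (intro Max_ge) (auto intro: rev_image_eqI)
  then have "(2::real) ^ (b + 1) \<le> 2 ^ (bstar crew cver s + 1)" by (intro power_increasing) auto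
  also have "\<dots> \<le> real (m_gen crew cver s)" unfolding m_gen_def by (rule real_nat_ceiling_ge)
  finally show ?thesis .
qed

lemma k_ver_ge:
  assumes "(a, b) \<in> shell crew cver s" "finite (shell crew cver s)"
  shows "6 * 2 ^ (b - a) \<le> real (k_ver crew cver s)"
proof -
  have "b - a \<le> jstar crew cver s"
    unfolding jstar_def using assms by (intro Max_ge) (auto intro: rev_image_eqI[of "(a, b)"])
  then have "6 * (2::real) ^ (b - a) \<le> 6 * 2 ^ jstar crew cver s"
    by (intro mult_left_mono power_increasing) auto
  also have "\<dots> \<le> real (k_ver crew cver s)" unfolding k_ver_def by (rule real_nat_ceiling_ge)
  finally show ?thesis .
qed

section \<open>The probabilistic model\<close>

definition scores :: "(nat \<Rightarrow> real \<times> bool) \<Rightarrow> nat \<Rightarrow> real" where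
  "scores x = (\<lambda>i. fst (x i))"

locale active_search = prob_space M for M :: "'w measure" +
  fixes D :: "real measure" and h :: "real \<Rightarrow> real"
    and R :: "nat \<Rightarrow> 'w \<Rightarrow> real" and V :: "nat \<Rightarrow> 'w \<Rightarrow> bool"
  assumes h_measurable [measurable]: "h \<in> borel_measurable borel"
    and h_range: "\<And>r. 0 \<le> h r \<and> h r \<le> 1"
    and h_mono: "mono h"
    and indep: "indep_vars (\<lambda>_. borel \<Otimes>\<^sub>M count_space UNIV) (\<lambda>i \<omega>. (R i \<omega>, V i \<omega>)) UNIV"
    and distr_R: "\<And>i. distr M borel (R i) = D"
    and measure_positive_label: "\<And>i A. A \<in> sets borel \<Longrightarrow>
          measure M {\<omega> \<in> space M. R i \<omega> \<in> A \<and> V i \<omega>} = (LINT r:A|D. h r)"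

begin

abbreviation q_at :: "real \<Rightarrow> real" where
  "q_at t \<equiv> measure D {t..}"

abbreviation s_at :: "real \<Rightarrow> real" where
  "s_at t \<equiv> LINT r:{t..}|D. h r"

definition cand_law :: "nat \<Rightarrow> (real \<times> bool) measure" where
  "cand_law i = distr M (borel \<Otimes>\<^sub>M count_space UNIV) (\<lambda>\<omega>. (R i \<omega>, V i \<omega>))"

lemma candidate_measurable [measurable]:
  "(\<lambda>\<omega>. (R i \<omega>, V i \<omega>)) \<in> measurable M (borel \<Otimes>\<^sub>M count_space UNIV)"
  using indep by (auto simp: indep_vars_def)

lemma R_measurable [measurable]: "R i \<in> borel_measurable M"
  using measurable_compose[OF candidate_measurable measurable_fst] by (simp add: comp_def)

lemma sets_D [measurable_cong]: "sets D = sets borel"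
  using distr_R[of 0] by (metis sets_distr)

lemma space_D: "space D = UNIV"
  using distr_R[of 0] by (metis space_distr space_borel)

lemma prob_space_D: "prob_space D"
  using prob_space_distr[OF R_measurable[of 0]] by (simp add: distr_R)

lemma sets_cand_law [measurable_cong]: "sets (cand_law i) = sets (borel \<Otimes>\<^sub>M count_space UNIV)"
  by (simp add: cand_law_def)

lemma prob_space_cand_law: "prob_space (cand_law i)"
  unfolding cand_law_def by (rule prob_space_distr) simp

sublocale candidates: product_prob_space cand_law
  by (simp add: product_prob_space_def product_prob_space_axioms_def product_sigma_finite_def
      prob_space_cand_law prob_space_imp_sigma_finite)

lemma measurable_score [measurable]:
  "i \<in> K \<Longrightarrow> (\<lambda>x. fst (x i)) \<in> borel_measurable (PiM K cand_law)"
  by measurable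

lemma pred_score_le [measurable]:
  "i \<in> K \<Longrightarrow> j \<in> K \<Longrightarrow> Measurable.pred (PiM K cand_law) (\<lambda>x. fst (x i) \<le> fst (x j))"
  unfolding pred_def by (intro borel_measurable_le measurable_score)

lemma measurable_one_minus_h_score [measurable]:
  "i \<in> K \<Longrightarrow> (\<lambda>x. 1 - h (fst (x i))) \<in> borel_measurable (PiM K cand_law)"
  using measurable_compose[OF measurable_score h_measurable] by (simp add: comp_def)

lemma pred_labels_negative [measurable]:
  "finite T \<Longrightarrow> T \<subseteq> K \<Longrightarrow> Measurable.pred (PiM K cand_law) (\<lambda>x. \<forall>i\<in>T. \<not> snd (x i))"
  by measurable auto

lemma nn_integral_cand_law_score:
  assumes [measurable]: "\<phi> \<in> borel_measurable borel"
  shows "(\<integral>\<^sup>+z. \<phi> (fst z) \<partial>cand_law i) = (\<integral>\<^sup>+r. \<phi> r \<partial>D)"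
proof -
  have "(\<integral>\<^sup>+z. \<phi> (fst z) \<partial>cand_law i) = (\<integral>\<^sup>+\<omega>. \<phi> (R i \<omega>) \<partial>M)"
    unfolding cand_law_def by (subst nn_integral_distr) auto
  also have "\<dots> = (\<integral>\<^sup>+r. \<phi> r \<partial>D)"
    unfolding distr_R[of i, symmetric] by (subst nn_integral_distr) auto
  finally show ?thesis .
qed

lemma nn_integral_one_minus_h:
  assumes "A \<in> sets borel"
  shows "(\<integral>\<^sup>+r. ennreal (1 - h r) * indicator A r \<partial>D) = ennreal (measure D A - (LINT r:A|D. h r))"
proof -
  interpret D: prob_space D by (rule prob_space_D)
  have [measurable]: "A \<in> sets D" using assms by (simp add: sets_D)
  have integrable: "integrable D (indicator A :: real \<Rightarrow> real)" "integrable D (\<lambda>r. indicator A r * h r)"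
    using h_range by (auto intro!: D.integrable_const_bound[where B=1] simp: indicator_def)
  have "(\<integral>\<^sup>+r. ennreal (1 - h r) * indicator A r \<partial>D)
      = (\<integral>\<^sup>+r. ennreal (indicator A r - indicator A r * h r) \<partial>D)"
    by (intro nn_integral_cong) (auto simp: indicator_def)
  also have "\<dots> = ennreal (\<integral>r. indicator A r - indicator A r * h r \<partial>D)"
    using Bochner_Integration.integrable_diff[OF integrable] h_range
    by (intro nn_integral_eq_integral) (auto simp: indicator_def)
  also have "(\<integral>r. indicator A r - indicator A r * h r \<partial>D) = measure D A - (LINT r:A|D. h r)"
    using integrable by (simp add: set_lebesgue_integral_def)
  finally show ?thesis .
qed

lemma measure_negative_label:
  assumes [measurable]: "A \<in> sets borel"
  shows "measure M {\<omega> \<in> space M. R i \<omega> \<in> A \<and> \<not> V i \<omega>} = measure D A - (LINT r:A|D. h r)"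
proof -
  have "{\<omega> \<in> space M. R i \<omega> \<in> A \<and> \<not> V i \<omega>} =
      {\<omega> \<in> space M. R i \<omega> \<in> A} - {\<omega> \<in> space M. R i \<omega> \<in> A \<and> V i \<omega>}"
    by auto
  then have "measure M {\<omega> \<in> space M. R i \<omega> \<in> A \<and> \<not> V i \<omega>} =
      measure M {\<omega> \<in> space M. R i \<omega> \<in> A} - measure M {\<omega> \<in> space M. R i \<omega> \<in> A \<and> V i \<omega>}"
    by (simp add: finite_measure_Diff subset_eq)
  moreover have "measure M {\<omega> \<in> space M. R i \<omega> \<in> A} = measure D A"
    using measure_distr[OF R_measurable[of i], of A]
    by (simp add: distr_R vimage_def Int_def conj_commute)
  ultimately show ?thesis using measure_positive_label[of A i] by simp
qed

lemma distr_negative_label: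
  "distr (density M (indicator {\<omega> \<in> space M. \<not> V i \<omega>})) borel (R i) = density D (\<lambda>r. ennreal (1 - h r))"
proof (rule measure_eqI)
  fix A assume "A \<in> sets (distr (density M (indicator {\<omega> \<in> space M. \<not> V i \<omega>})) borel (R i))"
  then have A [measurable]: "A \<in> sets borel" by simp
  have "emeasure (distr (density M (indicator {\<omega> \<in> space M. \<not> V i \<omega>})) borel (R i)) A
      = (\<integral>\<^sup>+\<omega>. indicator {\<omega> \<in> space M. \<not> V i \<omega>} \<omega> * indicator (R i -` A \<inter> space M) \<omega> \<partial>M)"
    by (simp add: emeasure_distr emeasure_density)
  also have "\<dots> = (\<integral>\<^sup>+\<omega>. indicator {\<omega> \<in> space M. R i \<omega> \<in> A \<and> \<not> V i \<omega>} \<omega> \<partial>M)"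
    by (intro nn_integral_cong) (auto simp: indicator_def)
  also have "\<dots> = ennreal (measure D A - (LINT r:A|D. h r))"
    by (simp add: emeasure_eq_measure measure_negative_label)
  also have "\<dots> = emeasure (density D (\<lambda>r. ennreal (1 - h r))) A"
    by (simp add: emeasure_density nn_integral_one_minus_h)
  finally show "emeasure (distr (density M (indicator {\<omega> \<in> space M. \<not> V i \<omega>})) borel (R i)) A
      = emeasure (density D (\<lambda>r. ennreal (1 - h r))) A" .
qed (simp add: sets_D)

lemma nn_integral_cand_law_negative:
  assumes [measurable]: "\<phi> \<in> borel_measurable borel"
  shows "(\<integral>\<^sup>+z. \<phi> (fst z) * indicator {z. \<not> snd z} z \<partial>cand_law i)
    = (\<integral>\<^sup>+z. \<phi> (fst z) * ennreal (1 - h (fst z)) \<partial>cand_law i)"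
proof -
  have "(\<integral>\<^sup>+z. \<phi> (fst z) * indicator {z. \<not> snd z} z \<partial>cand_law i)
      = (\<integral>\<^sup>+\<omega>. indicator {\<omega> \<in> space M. \<not> V i \<omega>} \<omega> * \<phi> (R i \<omega>) \<partial>M)"
    unfolding cand_law_def
    by (subst nn_integral_distr) (auto intro!: nn_integral_cong simp: indicator_def)
  also have "\<dots> = (\<integral>\<^sup>+r. \<phi> r \<partial>distr (density M (indicator {\<omega> \<in> space M. \<not> V i \<omega>})) borel (R i))"
    by (simp add: nn_integral_distr nn_integral_density)
  also have "\<dots> = (\<integral>\<^sup>+r. ennreal (1 - h r) * \<phi> r \<partial>D)"
    by (simp add: distr_negative_label nn_integral_density)
  also have "\<dots> = (\<integral>\<^sup>+z. \<phi> (fst z) * ennreal (1 - h (fst z)) \<partial>cand_law i)"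
    by (subst nn_integral_cand_law_score) (auto simp: mult.commute)
  finally show ?thesis .
qed

lemma nn_integral_label_negative:
  assumes "finite K" "j \<in> K" and g [measurable]: "g \<in> borel_measurable (PiM K cand_law)"
    and label_free: "\<And>x z. g (x(j := z)) = g (x(j := (fst z, True)))"
  shows "(\<integral>\<^sup>+x. g x * indicator {x. \<not> snd (x j)} x \<partial>PiM K cand_law)
    = (\<integral>\<^sup>+x. g x * ennreal (1 - h (fst (x j))) \<partial>PiM K cand_law)"
proof -
  define K' where "K' = K - {j}"
  have K: "K = insert j K'" "finite K'" "j \<notin> K'"
    using assms(1,2) by (auto simp: K'_def)
  have inner: "(\<integral>\<^sup>+z. g (x(j := z)) * indicator {z. \<not> snd z} z \<partial>cand_law j)
      = (\<integral>\<^sup>+z. g (x(j := z)) * ennreal (1 - h (fst z)) \<partial>cand_law j)"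
    if "x \<in> space (PiM K' cand_law)" for x
  proof -
    define \<phi> where "\<phi> r = g (x(j := (r, True)))" for r
    have "(\<lambda>z. x(j := z)) \<in> measurable (cand_law j) (PiM K cand_law)"
      using measurable_component_update[OF that K(3)] K(1) by simp
    moreover have "(\<lambda>r. (r, True)) \<in> measurable borel (cand_law j)"
      by measurable
    ultimately have "\<phi> \<in> borel_measurable borel"
      unfolding \<phi>_def using measurable_compose[OF _ measurable_compose[OF _ g]] by (simp add: comp_def)
    moreover have "g (x(j := z)) = \<phi> (fst z)" for z
      unfolding \<phi>_def by (rule label_free)
    ultimately show ?thesis
      using nn_integral_cand_law_negative[of \<phi> j] by simp
  qed
  have "(\<lambda>x. g x * indicator {x. \<not> snd (x j)} x) \<in> borel_measurable (PiM K cand_law)"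
    "(\<lambda>x. g x * ennreal (1 - h (fst (x j)))) \<in> borel_measurable (PiM K cand_law)"
    using assms(2) by measurable
  then have "(\<integral>\<^sup>+x. g x * indicator {x. \<not> snd (x j)} x \<partial>PiM K cand_law)
      = (\<integral>\<^sup>+x. \<integral>\<^sup>+z. g (x(j := z)) * indicator {z. \<not> snd z} z \<partial>cand_law j \<partial>PiM K' cand_law)"
    "(\<integral>\<^sup>+x. g x * ennreal (1 - h (fst (x j))) \<partial>PiM K cand_law)
      = (\<integral>\<^sup>+x. \<integral>\<^sup>+z. g (x(j := z)) * ennreal (1 - h (fst z)) \<partial>cand_law j \<partial>PiM K' cand_law)"
    using candidates.product_nn_integral_insert[OF K(2,3)] unfolding K(1)
    by (simp_all add: indicator_def)
  then show ?thesis
    by (simp add: inner cong: nn_integral_cong)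
qed

lemma nn_integral_labels_negative_insert:
  assumes "finite K" "j \<in> K" "T \<subseteq> K" "finite T" "j \<notin> T"
    and [measurable]: "(\<lambda>x. F (scores x)) \<in> borel_measurable (PiM K cand_law)"
  shows "(\<integral>\<^sup>+x. F (scores x) * indicator {x. \<forall>i\<in>insert j T. \<not> snd (x i)} x \<partial>PiM K cand_law)
    = (\<integral>\<^sup>+x. F (scores x) * ennreal (1 - h (fst (x j))) * indicator {x. \<forall>i\<in>T. \<not> snd (x i)} x
        \<partial>PiM K cand_law)"
proof -
  let ?g = "\<lambda>x. F (scores x) * indicator {x. \<forall>i\<in>T. \<not> snd (x i)} x"
  have "?g (x(j := z)) = ?g (x(j := (fst z, True)))" for x z
  proof -
    have "scores (x(j := z)) = scores (x(j := (fst z, True)))"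
      by (simp add: scores_def fun_eq_iff)
    moreover have "x(j := z) \<in> {x. \<forall>i\<in>T. \<not> snd (x i)} \<longleftrightarrow> x(j := (fst z, True)) \<in> {x. \<forall>i\<in>T. \<not> snd (x i)}"
      using assms(5) by auto
    ultimately show ?thesis by (simp only: indicator_def)
  qed
  moreover have "?g \<in> borel_measurable (PiM K cand_law)"
    using assms(3,4) by measurable
  ultimately have "(\<integral>\<^sup>+x. ?g x * indicator {x. \<not> snd (x j)} x \<partial>PiM K cand_law)
      = (\<integral>\<^sup>+x. ?g x * ennreal (1 - h (fst (x j))) \<partial>PiM K cand_law)"
    by (intro nn_integral_label_negative[OF assms(1,2)])
  moreover have "F (scores x) * indicator {x. \<forall>i\<in>insert j T. \<not> snd (x i)} x
      = ?g x * indicator {x. \<not> snd (x j)} x" for x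
    by (simp add: indicator_def)
  ultimately show ?thesis
    by (simp add: mult_ac)
qed

lemma nn_integral_labels_negative:
  assumes "finite K" "T \<subseteq> K" "(\<lambda>x. F (scores x)) \<in> borel_measurable (PiM K cand_law)"
  shows "(\<integral>\<^sup>+x. F (scores x) * indicator {x. \<forall>i\<in>T. \<not> snd (x i)} x \<partial>PiM K cand_law)
    = (\<integral>\<^sup>+x. F (scores x) * ennreal (\<Prod>i\<in>T. 1 - h (fst (x i))) \<partial>PiM K cand_law)"
proof -
  have "finite T" using assms(1,2) finite_subset by blast
  then show ?thesis using assms(2,3)
  proof (induction T arbitrary: F rule: finite_induct)
    case (insert j T)
    have jT: "j \<in> K" "T \<subseteq> K" using insert.prems(1) by auto
    define F' where "F' r = F r * ennreal (1 - h (r j))" for r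
    have "(\<lambda>x. F (scores x) * ennreal (1 - h (fst (x j)))) \<in> borel_measurable (PiM K cand_law)"
      using jT insert.prems(2) by measurable
    then have F'_measurable: "(\<lambda>x. F' (scores x)) \<in> borel_measurable (PiM K cand_law)"
      by (simp add: F'_def scores_def)
    have "(\<integral>\<^sup>+x. F (scores x) * indicator {x. \<forall>i\<in>insert j T. \<not> snd (x i)} x \<partial>PiM K cand_law)
        = (\<integral>\<^sup>+x. F' (scores x) * indicator {x. \<forall>i\<in>T. \<not> snd (x i)} x \<partial>PiM K cand_law)"
      using nn_integral_labels_negative_insert[OF assms(1) jT \<open>finite T\<close> insert.hyps(2) insert.prems(2)]
      by (simp add: F'_def scores_def)
    also have "\<dots> = (\<integral>\<^sup>+x. F' (scores x) * ennreal (\<Prod>i\<in>T. 1 - h (fst (x i))) \<partial>PiM K cand_law)"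
      by (rule insert.IH[OF jT(2) F'_measurable])
    also have "\<dots> = (\<integral>\<^sup>+x. F (scores x) * ennreal (\<Prod>i\<in>insert j T. 1 - h (fst (x i))) \<partial>PiM K cand_law)"
      using insert.hyps h_range
      by (intro nn_integral_cong) (simp add: F'_def scores_def prod_nonneg ennreal_mult mult_ac)
    finally show ?case .
  qed simp
qed

(* The order pattern of the first N scores takes finitely many values, each on a measurable set. *)
lemma sets_PiM_same_order_invariant:
  assumes "{..<N} \<subseteq> K" and invariant: "\<And>r r'. same_order N r r' \<Longrightarrow> P r = P r'"
  shows "{x \<in> space (PiM K cand_law). P (scores x)} \<in> sets (PiM K cand_law)"
proof -
  let ?pattern = "\<lambda>x. order_pattern N (scores x)" and ?C = "Pow ({..<N} \<times> {..<N})"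
  let ?S = "{x \<in> space (PiM K cand_law). P (scores x)}"
  have pattern_measurable: "?pattern \<in> measurable (PiM K cand_law) (count_space ?C)"
  proof (rule measurable_count_space_eq2[THEN iffD2], simp, intro conjI ballI)
    show "?pattern \<in> space (PiM K cand_law) \<rightarrow> ?C"
      by (auto simp: order_pattern_def)
  next
    fix A assume "A \<in> ?C"
    then have "?pattern -` {A} \<inter> space (PiM K cand_law) = {x \<in> space (PiM K cand_law).
        \<forall>i\<in>{..<N}. \<forall>j\<in>{..<N}. (scores x i \<le> scores x j) = ((i, j) \<in> A)}"
      using order_pattern_eq_iff[of A N] by blast
    also have "\<dots> \<in> sets (PiM K cand_law)"
      using assms(1) unfolding scores_def pred_def[symmetric]
      by (intro pred_intros_finite(3) pred_intros_logic(6) pred_score_le) auto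
    finally show "?pattern -` {A} \<inter> space (PiM K cand_law) \<in> sets (PiM K cand_law)" .
  qed
  have "P (scores x) = P (scores y)" if "?pattern x = ?pattern y" for x y
    using that by (intro invariant) (simp add: same_order_iff_order_pattern)
  then have "?S = ?pattern -` (?pattern ` ?S) \<inter> space (PiM K cand_law)"
    by blast
  also have "\<dots> \<in> sets (PiM K cand_law)"
    by (rule measurable_sets[OF pattern_measurable]) (auto simp: order_pattern_def)
  finally show ?thesis .
qed

lemma sets_PiM_labels_negative:
  assumes "{..<N} \<subseteq> K" and S: "\<And>r. S r \<subseteq> {..<N}" "\<And>r r'. same_order N r r' \<Longrightarrow> S r = S r'"
  shows "{x \<in> space (PiM K cand_law). \<forall>i\<in>S (scores x). \<not> snd (x i)} \<in> sets (PiM K cand_law)"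
proof -
  have "{x \<in> space (PiM K cand_law). \<forall>i\<in>S (scores x). \<not> snd (x i)} = (\<Union>T\<in>Pow {..<N}.
      {x \<in> space (PiM K cand_law). S (scores x) = T} \<inter> {x \<in> space (PiM K cand_law). \<forall>i\<in>T. \<not> snd (x i)})"
    using S(1) by blast
  also have "\<dots> \<in> sets (PiM K cand_law)"
  proof (intro sets.finite_UN sets.Int ballI)
    fix T assume "T \<in> Pow {..<N}"
    show "{x \<in> space (PiM K cand_law). S (scores x) = T} \<in> sets (PiM K cand_law)"
      using assms(1) S(2) by (intro sets_PiM_same_order_invariant) auto
    show "{x \<in> space (PiM K cand_law). \<forall>i\<in>T. \<not> snd (x i)} \<in> sets (PiM K cand_law)"
      using assms(1) \<open>T \<in> Pow {..<N}\<close> finite_subset[of T "{..<N}"]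
      by (intro predE pred_labels_negative) auto
  qed simp
  finally show ?thesis .
qed

lemma measurable_indicator_same_order_invariant:
  assumes "{..<N} \<subseteq> K" "\<And>r r'. same_order N r r' \<Longrightarrow> S r = S r'"
  shows "(\<lambda>x. if S (scores x) = T then 1 else 0 :: ennreal) \<in> borel_measurable (PiM K cand_law)"
  using assms by (intro measurable_If measurable_const sets_PiM_same_order_invariant) auto

lemma measurable_prod_one_minus_h [measurable]:
  "T \<subseteq> K \<Longrightarrow> (\<lambda>x. ennreal (\<Prod>i\<in>T. 1 - h (fst (x i)))) \<in> borel_measurable (PiM K cand_law)"
  by (intro measurable_compose[OF _ measurable_ennreal] borel_measurable_prod) auto

lemma measurable_prod_random_set:
  assumes "{..<N} \<subseteq> K" "\<And>r. S r \<subseteq> {..<N}" "\<And>r r'. same_order N r r' \<Longrightarrow> S r = S r'"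
  shows "(\<lambda>x. ennreal (\<Prod>i\<in>S (scores x). 1 - h (fst (x i)))) \<in> borel_measurable (PiM K cand_law)"
proof -
  have "(\<lambda>x. \<Sum>T\<in>Pow {..<N}. (if S (scores x) = T then 1 else 0) * ennreal (\<Prod>i\<in>T. 1 - h (fst (x i))))
      \<in> borel_measurable (PiM K cand_law)"
    using assms(1) by (intro borel_measurable_sum borel_measurable_times_ennreal
        measurable_indicator_same_order_invariant[OF assms(1,3)] measurable_prod_one_minus_h) auto
  then show ?thesis
    using assms(2) by (simp add: sum_Pow_select)
qed

lemma emeasure_PiM_labels_negative:
  assumes "finite K" "{..<N} \<subseteq> K"
    and S: "\<And>r. S r \<subseteq> {..<N}" "\<And>r r'. same_order N r r' \<Longrightarrow> S r = S r'"
  shows "emeasure (PiM K cand_law) {x \<in> space (PiM K cand_law). \<forall>i\<in>S (scores x). \<not> snd (x i)}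
    = (\<integral>\<^sup>+x. ennreal (\<Prod>i\<in>S (scores x). 1 - h (fst (x i))) \<partial>PiM K cand_law)"
proof -
  define F where "F T r = (if S r = T then 1 else 0 :: ennreal)" for T r
  have F_measurable: "(\<lambda>x. F T (scores x)) \<in> borel_measurable (PiM K cand_law)" for T
    unfolding F_def by (rule measurable_indicator_same_order_invariant[OF assms(2) S(2)])
  have T_subset: "T \<in> Pow {..<N} \<Longrightarrow> finite T \<and> T \<subseteq> K" for T
    using assms(2) finite_subset[of T "{..<N}"] by auto
  have select: "(\<Sum>T\<in>Pow {..<N}. F T r * w T) = w (S r)" for r and w :: "nat set \<Rightarrow> ennreal"
    unfolding F_def using S(1)[of r] by (simp add: sum_Pow_select)
  have "emeasure (PiM K cand_law) {x \<in> space (PiM K cand_law). \<forall>i\<in>S (scores x). \<not> snd (x i)}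
      = (\<integral>\<^sup>+x. (\<Sum>T\<in>Pow {..<N}. F T (scores x) * indicator {x. \<forall>i\<in>T. \<not> snd (x i)} x) \<partial>PiM K cand_law)"
    using sets_PiM_labels_negative[OF assms(2) S]
    by (auto simp: select indicator_def intro!: nn_integral_cong simp flip: nn_integral_indicator)
  also have "\<dots> = (\<Sum>T\<in>Pow {..<N}.
      \<integral>\<^sup>+x. F T (scores x) * indicator {x. \<forall>i\<in>T. \<not> snd (x i)} x \<partial>PiM K cand_law)"
    using T_subset by (intro nn_integral_sum) (auto intro!: borel_measurable_times_ennreal F_measurable)
  also have "\<dots> = (\<Sum>T\<in>Pow {..<N}.
      \<integral>\<^sup>+x. F T (scores x) * ennreal (\<Prod>i\<in>T. 1 - h (fst (x i))) \<partial>PiM K cand_law)"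
    using T_subset by (intro sum.cong nn_integral_labels_negative[OF assms(1)] F_measurable) auto
  also have "\<dots> = (\<integral>\<^sup>+x. (\<Sum>T\<in>Pow {..<N}. F T (scores x) * ennreal (\<Prod>i\<in>T. 1 - h (fst (x i))))
      \<partial>PiM K cand_law)"
    using T_subset
    by (intro nn_integral_sum[symmetric]) (auto intro!: borel_measurable_times_ennreal F_measurable)
  also have "\<dots> = (\<integral>\<^sup>+x. ennreal (\<Prod>i\<in>S (scores x). 1 - h (fst (x i))) \<partial>PiM K cand_law)"
    by (simp add: select)
  finally show ?thesis .
qed

lemma distr_candidates_PiM:
  assumes "K \<noteq> {}"
  shows "distr M (PiM K cand_law) (\<lambda>\<omega>. \<lambda>i\<in>K. (R i \<omega>, V i \<omega>)) = PiM K cand_law"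
proof -
  have "distr M (PiM K cand_law) (\<lambda>\<omega>. \<lambda>i\<in>K. (R i \<omega>, V i \<omega>))
      = distr M (PiM K (\<lambda>_. borel \<Otimes>\<^sub>M count_space UNIV)) (\<lambda>\<omega>. \<lambda>i\<in>K. (R i \<omega>, V i \<omega>))"
    by (intro distr_cong refl sets_PiM_cong) (simp_all add: sets_cand_law)
  also have "\<dots> = PiM K (\<lambda>i. distr M (borel \<Otimes>\<^sub>M count_space UNIV) (\<lambda>\<omega>. (R i \<omega>, V i \<omega>)))"
    using indep_vars_iff_distr_eq_PiM[OF assms, where M'="\<lambda>_. borel \<Otimes>\<^sub>M count_space UNIV"
        and X="\<lambda>i \<omega>. (R i \<omega>, V i \<omega>)"] indep_vars_subset[OF indep, of K]
    by simp
  also have "\<dots> = PiM K cand_law"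
    by (simp only: cand_law_def[symmetric])
  finally show ?thesis .
qed

lemma emeasure_labels_negative:
  assumes "0 < N" and S: "\<And>r. S r \<subseteq> {..<N}" "\<And>r r'. same_order N r r' \<Longrightarrow> S r = S r'"
  shows "emeasure M {\<omega> \<in> space M. \<forall>i\<in>S (\<lambda>i. R i \<omega>). \<not> V i \<omega>}
    = (\<integral>\<^sup>+x. ennreal (\<Prod>i\<in>S (scores x). 1 - h (fst (x i))) \<partial>PiM {..<N} cand_law)"
proof -
  let ?X = "\<lambda>\<omega>. \<lambda>i\<in>{..<N}. (R i \<omega>, V i \<omega>)"
  let ?E = "{x \<in> space (PiM {..<N} cand_law). \<forall>i\<in>S (scores x). \<not> snd (x i)}"
  have X_measurable: "?X \<in> measurable M (PiM {..<N} cand_law)"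
    by (intro measurable_restrict) measurable
  have "(\<forall>i\<in>S (\<lambda>i. R i \<omega>). \<not> V i \<omega>) \<longleftrightarrow> ?X \<omega> \<in> ?E" if "\<omega> \<in> space M" for \<omega>
  proof -
    have "S (scores (?X \<omega>)) = S (\<lambda>i. R i \<omega>)"
      by (intro S(2)) (simp add: same_order_def scores_def)
    moreover have "snd (?X \<omega> i) = V i \<omega>" if "i \<in> S (\<lambda>i. R i \<omega>)" for i
      using S(1) that by auto
    ultimately show ?thesis
      using measurable_space[OF X_measurable that] by auto
  qed
  then have "{\<omega> \<in> space M. \<forall>i\<in>S (\<lambda>i. R i \<omega>). \<not> V i \<omega>} = ?X -` ?E \<inter> space M"
    by blast
  then have "emeasure M {\<omega> \<in> space M. \<forall>i\<in>S (\<lambda>i. R i \<omega>). \<not> V i \<omega>}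
      = emeasure (distr M (PiM {..<N} cand_law) ?X) ?E"
    using sets_PiM_labels_negative[OF subset_refl S] X_measurable by (simp add: emeasure_distr)
  also have "\<dots> = emeasure (PiM {..<N} cand_law) ?E"
    using assms(1) by (subst distr_candidates_PiM) auto
  also have "\<dots> = (\<integral>\<^sup>+x. ennreal (\<Prod>i\<in>S (scores x). 1 - h (fst (x i))) \<partial>PiM {..<N} cand_law)"
    by (rule emeasure_PiM_labels_negative[OF finite_lessThan subset_refl S])
  finally show ?thesis .
qed

lemma tail_bounds: "0 \<le> s_at t" "s_at t \<le> q_at t" "q_at t \<le> 1"
proof -
  interpret D: prob_space D by (rule prob_space_D)
  show "0 \<le> s_at t"
    using measure_positive_label[of "{t..}" 0]
      measure_nonneg[of M "{\<omega> \<in> space M. R 0 \<omega> \<in> {t..} \<and> V 0 \<omega>}"] by simp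
  show "s_at t \<le> q_at t"
    using measure_negative_label[of "{t..}" 0]
      measure_nonneg[of M "{\<omega> \<in> space M. R 0 \<omega> \<in> {t..} \<and> \<not> V 0 \<omega>}"] by simp
  show "q_at t \<le> 1"
    by simp
qed

lemma nn_integral_cand_law_threshold:
  assumes "0 \<le> a" "0 \<le> b"
  shows "(\<integral>\<^sup>+z. ennreal (if t \<le> fst z then (1 - h (fst z)) * a else b) \<partial>cand_law j)
    = ennreal ((q_at t - s_at t) * a + (1 - q_at t) * b)"
proof -
  interpret D: prob_space D by (rule prob_space_D)
  have "(\<integral>\<^sup>+r. indicator {..<t} r \<partial>D) = emeasure D (space D - {t..})"
    by (simp add: sets_D space_D Compl_eq_Diff_UNIV[symmetric])
  also have "\<dots> = ennreal (1 - q_at t)"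
    using D.prob_compl[of "{t..}"] by (simp add: sets_D D.emeasure_eq_measure)
  finally have below: "(\<integral>\<^sup>+r. indicator {..<t} r \<partial>D) = ennreal (1 - q_at t)" .
  have "(\<integral>\<^sup>+z. ennreal (if t \<le> fst z then (1 - h (fst z)) * a else b) \<partial>cand_law j)
      = (\<integral>\<^sup>+r. ennreal a * (ennreal (1 - h r) * indicator {t..} r) + ennreal b * indicator {..<t} r \<partial>D)"
    using assms h_range
    by (subst nn_integral_cand_law_score)
       (auto intro!: nn_integral_cong simp: indicator_def ennreal_mult' mult.commute)
  also have "\<dots> = ennreal a * ennreal (q_at t - s_at t) + ennreal b * ennreal (1 - q_at t)"
    by (simp add: nn_integral_add nn_integral_cmult sets_D nn_integral_one_minus_h below)
  also have "\<dots> = ennreal ((q_at t - s_at t) * a + (1 - q_at t) * b)"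
    using assms tail_bounds[of t] by (simp add: ennreal_mult' mult.commute)
  finally show ?thesis .
qed

lemma measurable_miss_above [measurable]:
  "set js \<subseteq> K \<Longrightarrow> (\<lambda>x. miss_above t h js k (scores x)) \<in> borel_measurable (PiM K cand_law)"
proof (induction js arbitrary: k)
  case (Cons i js)
  then have "i \<in> K" "set js \<subseteq> K" by auto
  have "{x \<in> space (PiM K cand_law). t \<le> fst (x i)} \<in> sets (PiM K cand_law)"
    using \<open>i \<in> K\<close> by measurable
  then show ?case
    unfolding miss_above_Cons using Cons.IH[OF \<open>set js \<subseteq> K\<close>] \<open>i \<in> K\<close>
    by (intro measurable_If borel_measurable_times measurable_const) (simp_all add: scores_def)
qed simp

lemma nn_integral_miss_above_Cons:
  assumes "y \<notin> set js"
  shows "(\<integral>\<^sup>+x. miss_above t h (y # js) (Suc k) (scores x) \<partial>PiM (insert y (set js)) cand_law)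
    = ennreal (q_at t - s_at t) * (\<integral>\<^sup>+x. miss_above t h js k (scores x) \<partial>PiM (set js) cand_law)
      + ennreal (1 - q_at t) * (\<integral>\<^sup>+x. miss_above t h js (Suc k) (scores x) \<partial>PiM (set js) cand_law)"
proof -
  let ?m = "\<lambda>k x. miss_above t h js k (scores x)"
  have m01: "0 \<le> ?m k x" for k x
    using miss_above_bounds[of h, OF h_range] by blast
  have "miss_above t h (y # js) (Suc k) (scores (x(y := z)))
      = (if t \<le> fst z then (1 - h (fst z)) * ?m k x else ?m (Suc k) x)" for x z
  proof -
    have "miss_above t h js k' (scores (x(y := z))) = ?m k' x" for k'
      using assms by (intro miss_above_cong) (auto simp: scores_def)
    then show ?thesis by (simp add: miss_above_Cons scores_def)
  qed
  then have "(\<integral>\<^sup>+x. miss_above t h (y # js) (Suc k) (scores x) \<partial>PiM (insert y (set js)) cand_law)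
      = (\<integral>\<^sup>+x. ennreal ((q_at t - s_at t) * ?m k x + (1 - q_at t) * ?m (Suc k) x)
          \<partial>PiM (set js) cand_law)"
    using assms m01 by (simp add: candidates.product_nn_integral_insert nn_integral_cand_law_threshold)
  also have "\<dots> = ennreal (q_at t - s_at t) * (\<integral>\<^sup>+x. ?m k x \<partial>PiM (set js) cand_law)
      + ennreal (1 - q_at t) * (\<integral>\<^sup>+x. ?m (Suc k) x \<partial>PiM (set js) cand_law)"
    using m01 tail_bounds[of t]
    by (simp add: ennreal_mult nn_integral_add nn_integral_cmult)
  finally show ?thesis .
qed

lemma nn_integral_miss_above_le:
  assumes "0 < q_at t" "distinct js"
  shows "(\<integral>\<^sup>+x. miss_above t h js k (scores x) \<partial>PiM (set js) cand_law)
    \<le> ennreal ((1 - s_at t) ^ length js + (1 - s_at t / q_at t) ^ k)"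
  using assms(2)
proof (induction js arbitrary: k)
  let ?X = "1 - s_at t" and ?Y = "1 - s_at t / q_at t"
  have XY: "0 \<le> ?X" "0 \<le> ?Y"
    using tail_bounds[of t] assms(1) by (auto simp: field_simps)
  {
    case Nil
    have "(\<integral>\<^sup>+x. miss_above t h [] k (scores x) \<partial>PiM (set []) cand_law) = 1"
      using prob_space.emeasure_space_1[OF prob_space_PiM[OF prob_space_cand_law]] by simp
    then show ?case using XY by simp
  next
    case (Cons y js)
    then have IH: "(\<integral>\<^sup>+x. miss_above t h js k' (scores x) \<partial>PiM (set js) cand_law)
        \<le> ennreal (?X ^ length js + ?Y ^ k')" for k'
      by simp
    show ?case
    proof (cases k)
      case 0
      have "(\<integral>\<^sup>+x. miss_above t h (y # js) k (scores x) \<partial>PiM (set (y # js)) cand_law) = 1"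
        using 0 prob_space.emeasure_space_1[OF prob_space_PiM[OF prob_space_cand_law]]
        by (simp add: miss_above_Cons)
      then show ?thesis using XY 0 by simp
    next
      case (Suc k')
      have "(q_at t - s_at t) * (?X ^ length js + ?Y ^ k') + (1 - q_at t) * (?X ^ length js + ?Y ^ Suc k')
          = ?X ^ length (y # js) + ?Y ^ k"
        using assms(1) Suc by (simp add: field_simps)
      moreover have "(\<integral>\<^sup>+x. miss_above t h (y # js) k (scores x) \<partial>PiM (set (y # js)) cand_law)
          \<le> ennreal ((q_at t - s_at t) * (?X ^ length js + ?Y ^ k')
              + (1 - q_at t) * (?X ^ length js + ?Y ^ Suc k'))"
        using Cons.prems Suc IH[of k'] IH[of "Suc k'"] tail_bounds[of t] XY
        by (simp add: nn_integral_miss_above_Cons ennreal_mult add_mono mult_left_mono)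
      ultimately show ?thesis by simp
    qed
  }
qed

lemma nn_integral_mult_miss_above_le:
  assumes "0 < q_at t" "G \<le> n"
    and f: "f \<in> borel_measurable (PiM {..<G} cand_law)" "\<And>x y. \<forall>i\<in>{..<G}. x i = y i \<Longrightarrow> f x = f y"
  shows "(\<integral>\<^sup>+x. f x * ennreal (miss_above t h [G..<n] k (scores x)) \<partial>PiM {..<n} cand_law)
    \<le> ennreal ((1 - s_at t) ^ (n - G) + (1 - s_at t / q_at t) ^ k) * (\<integral>\<^sup>+x. f x \<partial>PiM {..<n} cand_law)"
proof -
  define Q where "Q x = ennreal (miss_above t h [G..<n] k (scores x))" for x
  have split: "{..<G} \<inter> {G..<n} = {}" "{..<G} \<union> {G..<n} = {..<n}"
    using assms(2) by auto
  have Q_measurable: "Q \<in> borel_measurable (PiM {G..<n} cand_law)"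
    unfolding Q_def by measurable
  have Q_local: "Q x = Q y" if "\<forall>i\<in>{G..<n}. x i = y i" for x y
    using that unfolding Q_def by (intro arg_cong[where f=ennreal] miss_above_cong) (simp add: scores_def)
  have "(\<integral>\<^sup>+x. f x * Q x \<partial>PiM {..<n} cand_law)
      = (\<integral>\<^sup>+x. f x \<partial>PiM {..<G} cand_law) * (\<integral>\<^sup>+x. Q x \<partial>PiM {G..<n} cand_law)"
    using candidates.nn_integral_PiM_mult_split[OF split(1) _ _ f Q_measurable Q_local] split(2)
    by simp
  also have "\<dots> \<le> (\<integral>\<^sup>+x. f x \<partial>PiM {..<G} cand_law)
      * ennreal ((1 - s_at t) ^ (n - G) + (1 - s_at t / q_at t) ^ k)"
    using nn_integral_miss_above_le[OF assms(1), of "[G..<n]" k]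
    by (intro mult_left_mono) (simp_all add: Q_def)
  also have "(\<integral>\<^sup>+x. f x \<partial>PiM {..<G} cand_law) = (\<integral>\<^sup>+x. f x * 1 \<partial>PiM {..<n} cand_law)"
  proof -
    have "emeasure (PiM {G..<n} cand_law) (space (PiM {G..<n} cand_law)) = 1"
      by (intro prob_space.emeasure_space_1 prob_space_PiM prob_space_cand_law)
    then show ?thesis
      using candidates.nn_integral_PiM_mult_split[OF split(1) _ _ f, of "\<lambda>_. 1"] split(2)
      by simp
  qed
  finally show ?thesis
    by (simp add: Q_def mult.commute)
qed

lemma emeasure_reaches:
  assumes "gen_before crew cver s \<le> N" "0 < N"
  shows "emeasure M {\<omega> \<in> space M. reaches crew cver (\<lambda>i. R i \<omega>) (\<lambda>i. V i \<omega>) s}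
    = (\<integral>\<^sup>+x. ennreal (\<Prod>i\<in>verified_before crew cver (scores x) s. 1 - h (fst (x i))) \<partial>PiM {..<N} cand_law)"
  unfolding reaches_iff_verified_before
proof (rule emeasure_labels_negative[OF assms(2)])
  show "verified_before crew cver r s \<subseteq> {..<N}" for r
    using verified_before_subset assms(1) by fastforce
  show "verified_before crew cver r s = verified_before crew cver r' s" if "same_order N r r'" for r r'
    using verified_before_same_order[OF that assms(1)] .
qed

lemma emeasure_reaches_Suc_le:
  assumes "shell crew cver s \<noteq> {}" "0 < q_at t"
  shows "emeasure M {\<omega> \<in> space M. reaches crew cver (\<lambda>i. R i \<omega>) (\<lambda>i. V i \<omega>) (Suc s)}
    \<le> ennreal ((1 - s_at t) ^ m_gen crew cver s + (1 - s_at t / q_at t) ^ k_ver crew cver s)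
      * emeasure M {\<omega> \<in> space M. reaches crew cver (\<lambda>i. R i \<omega>) (\<lambda>i. V i \<omega>) s}"
proof -
  define G where "G = gen_before crew cver s"
  define n where "n = gen_before crew cver (Suc s)"
  have n: "n = G + m_gen crew cver s" "0 < n"
    using assms(1) m_gen_pos[of crew cver s] by (auto simp: n_def G_def gen_before_Suc)
  define g where "g x = ennreal (\<Prod>i\<in>verified_before crew cver (scores x) s. 1 - h (fst (x i)))" for x
  have g_measurable: "g \<in> borel_measurable (PiM {..<G} cand_law)"
    unfolding g_def using verified_before_subset verified_before_same_order
    by (intro measurable_prod_random_set[of G]) (auto simp: G_def)
  have g_local: "g x = g y" if "\<forall>i\<in>{..<G}. x i = y i" for x y
  proof -
    have "verified_before crew cver (scores x) s = verified_before crew cver (scores y) s"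
      using that by (intro verified_before_same_order[of G]) (auto simp: same_order_def scores_def G_def)
    then show ?thesis
      using that verified_before_subset[of crew cver "scores y" s]
      unfolding g_def G_def by (intro arg_cong[where f=ennreal] prod.cong) auto
  qed
  have "emeasure M {\<omega> \<in> space M. reaches crew cver (\<lambda>i. R i \<omega>) (\<lambda>i. V i \<omega>) (Suc s)}
      = (\<integral>\<^sup>+x. ennreal (\<Prod>i\<in>verified_before crew cver (scores x) (Suc s). 1 - h (fst (x i)))
          \<partial>PiM {..<n} cand_law)"
    using n by (intro emeasure_reaches) (simp_all add: n_def)
  also have "\<dots> \<le> (\<integral>\<^sup>+x. g x * ennreal (miss_above t h [G..<n] (k_ver crew cver s) (scores x))
      \<partial>PiM {..<n} cand_law)"
    using prod_verified_before_Suc_le[OF h_mono h_range assms(1)] miss_above_bounds[of h, OF h_range]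
      h_range
    by (intro nn_integral_mono)
       (simp add: g_def G_def n_def scores_def prod_nonneg flip: ennreal_mult)
  also have "\<dots> \<le> ennreal ((1 - s_at t) ^ m_gen crew cver s + (1 - s_at t / q_at t) ^ k_ver crew cver s)
      * (\<integral>\<^sup>+x. g x \<partial>PiM {..<n} cand_law)"
    using nn_integral_mult_miss_above_le[OF assms(2) _ g_measurable g_local, of n "k_ver crew cver s"]
      n(1)
    by simp
  also have "(\<integral>\<^sup>+x. g x \<partial>PiM {..<n} cand_law)
      = emeasure M {\<omega> \<in> space M. reaches crew cver (\<lambda>i. R i \<omega>) (\<lambda>i. V i \<omega>) s}"
    using emeasure_reaches[of crew cver s n] n by (simp add: g_def G_def)
  finally show ?thesis .
qed

lemma prob_fails_and_reaches_le:
  assumes "shell crew cver s \<noteq> {}" "0 < q_at t"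
  shows "measure M {\<omega> \<in> space M. shell_fails crew cver (\<lambda>i. R i \<omega>) (\<lambda>i. V i \<omega>) s
      \<and> reaches crew cver (\<lambda>i. R i \<omega>) (\<lambda>i. V i \<omega>) s}
    \<le> ((1 - s_at t) ^ m_gen crew cver s + (1 - s_at t / q_at t) ^ k_ver crew cver s)
      * measure M {\<omega> \<in> space M. reaches crew cver (\<lambda>i. R i \<omega>) (\<lambda>i. V i \<omega>) s}"
proof -
  have "0 \<le> (1 - s_at t) ^ m_gen crew cver s + (1 - s_at t / q_at t) ^ k_ver crew cver s"
    using tail_bounds[of t] assms(2) by (simp add: field_simps)
  then show ?thesis
    using emeasure_reaches_Suc_le[OF assms]
    by (simp add: reaches_Suc emeasure_eq_measure conj_commute flip: ennreal_mult)
qed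

end

theorem lemma7:
  fixes M :: "'w measure" and D :: "real measure" and h :: "real \<Rightarrow> real"
    and R :: "nat \<Rightarrow> 'w \<Rightarrow> real" and V :: "nat \<Rightarrow> 'w \<Rightarrow> bool"
    and crew cver t :: real and a b sstar u :: nat
  assumes "prob_space M"
    and h_meas: "h \<in> borel_measurable borel"
    and h_range: "\<And>r. 0 \<le> h r \<and> h r \<le> 1"
    and h_mono: "mono h"
    and indep: "prob_space.indep_vars M (\<lambda>_. borel \<Otimes>\<^sub>M count_space UNIV)
                  (\<lambda>i \<omega>. (R i \<omega>, V i \<omega>)) UNIV"
    and distR: "\<And>i. distr M borel (R i) = D"
    and condV: "\<And>i A. A \<in> sets borel \<Longrightarrow>
                  measure M {\<omega> \<in> space M. R i \<omega> \<in> A \<and> V i \<omega>} = (LINT r:A|D. h r)"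
    and "crew > 0" and "cver > 0"
    and qpos: "measure D {t..} > 0"
    and spos: "(LINT r:{t..}|D. h r) > 0"
    and dyad_a: "1 / 2 ^ (a + 1) < measure D {t..} \<and> measure D {t..} \<le> 1 / 2 ^ a"
    and dyad_b: "1 / 2 ^ b \<le> (LINT r:{t..}|D. h r) \<and> (LINT r:{t..}|D. h r) < 2 / 2 ^ b"
    and shell_star: "(a, b) \<in> shell crew cver sstar"
  shows "cond_prob M
           (\<lambda>\<omega>. shell_fails crew cver (\<lambda>i. R i \<omega>) (\<lambda>i. V i \<omega>) (sstar + u))
           (\<lambda>\<omega>. reaches crew cver (\<lambda>i. R i \<omega>) (\<lambda>i. V i \<omega>) (sstar + u))
         \<le> exp (- (2 ^ (u + 1))) + exp (- (2 ^ u))"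
proof -
  interpret active_search M D h R V
    using assms(1) h_meas h_range h_mono indep distR condV
    by (simp add: active_search_def active_search_axioms_def)
  have shell: "(a, b + u) \<in> shell crew cver (sstar + u)"
    by (rule shell_shift[OF shell_star])
  have finite: "finite (shell crew cver (sstar + u))"
    using assms(8,9) by (rule finite_shell)
  let ?fails = "{\<omega> \<in> space M. shell_fails crew cver (\<lambda>i. R i \<omega>) (\<lambda>i. V i \<omega>) (sstar + u)
      \<and> reaches crew cver (\<lambda>i. R i \<omega>) (\<lambda>i. V i \<omega>) (sstar + u)}"
  let ?reaches = "{\<omega> \<in> space M. reaches crew cver (\<lambda>i. R i \<omega>) (\<lambda>i. V i \<omega>) (sstar + u)}"
  have "prob ?fails \<le> ((1 - s_at t) ^ m_gen crew cver (sstar + u)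
      + (1 - s_at t / q_at t) ^ k_ver crew cver (sstar + u)) * prob ?reaches"
    using shell qpos by (intro prob_fails_and_reaches_le) auto
  also have "\<dots> \<le> (exp (- (2 ^ (u + 1))) + exp (- (2 ^ u))) * prob ?reaches"
  proof (intro mult_right_mono add_mono)
    show "(1 - s_at t) ^ m_gen crew cver (sstar + u) \<le> exp (- (2 ^ (u + 1)))"
      using dyad_b tail_bounds[of t] m_gen_ge[OF shell finite]
      by (intro power_one_minus_le_exp_two_pow) auto
    show "(1 - s_at t / q_at t) ^ k_ver crew cver (sstar + u) \<le> exp (- (2 ^ u))"
      using dyad_a dyad_b tail_bounds[of t] qpos shell_star k_ver_ge[OF shell finite]
      by (intro power_one_minus_div_le_exp_two_pow) (auto simp: shell_def)
  qed simp
  finally show ?thesis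
    by (intro cond_prob_le) (auto intro: add_nonneg_nonneg)
qed

end
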